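(* The size $z_{77}$ of the non-self-referencing LZ77 factorization satisfies (already over a ternary alphabet): substitutions: $\liminf_{n\to\infty}\mathsf{MS}_{\mathrm{sub}}(z_{77},n)\ge 2$ and $\mathsf{AS}_{\mathrm{sub}}(z_{77},n)\ge z_{77}-1$; insertions: $\liminf_{n\to\infty}\mathsf{MS}_{\mathrm{ins}}(z_{77},n)\ge 2$ and $\mathsf{AS}_{\mathrm{ins}}(z_{77},n)\ge z_{77}-1$; deletions: $\liminf_{n\to\infty}\mathsf{MS}_{\mathrm{del}}(z_{77},n)\ge 2$ and $\mathsf{AS}_{\mathrm{del}}(z_{77},n)\ge z_{77}-2$.
   Context: Strings are over an alphabet $\Sigma$ (with at least three characters); $\mathsf{ed}$ is the edit distance. $\mathsf{MS}_{\mathrm{sub}}(C,n)=\max_{T\in\Sigma^n}\{C(T')/C(T): T'\in\Sigma^n,\ \mathsf{ed}(T,T')=1\}$, with $\mathsf{MS}_{\mathrm{ins}},\mathsf{MS}_{\mathrm{del}}$ analogous for $T'$ of length $n+1$, resp. $n-1$, and $\mathsf{AS}_\ast$ analogous with $C(T')-C(T)$. A bound "$\mathsf{AS}\ge z_{77}-c$" means there are strings $T$ with $z_{77}(T)$ arbitrarily large and $T'$ obtained by one edit of that type with $z_{77}(T')-z_{77}(T)\ge z_{77}(T)-c$. The non-self-referencing LZ77 factorization of $T$ is $T=f_1\cdots f_z$ where, with $f_0=\varepsilon$, for each $1\le i<z$ the factor $f_i$ is the shortest prefix of $f_i\cdots f_z$ that does not occur as a substring of $f_0f_1\cdots f_{i-1}$,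 and $f_z$ is the remaining suffix; $z_{77}(T)=z$. *)

theory Defs
  imports Complex_Main "HOL-Library.Sublist" "HOL-Library.Extended_Real" "HOL-Library.Liminf_Limsup"
begin

fun ed :: "'a list \<Rightarrow> 'a list \<Rightarrow> nat" where
  "ed [] ys = length ys"
| "ed (x # xs) [] = Suc (length xs)"
| "ed (x # xs) (y # ys) =
     min (min (ed xs (y # ys) + 1) (ed (x # xs) ys + 1))
         (ed xs ys + (if x = y then 0 else 1))"

definition strs :: "'a set \<Rightarrow> nat \<Rightarrow> 'a list set" where
  "strs Alph n = {T. set T \<subseteq> Alph \<and> length T = n}"

text \<open>Number of factors of the non-self-referencing LZ77 factorization of R,
  given the already factorized prefix P (f_0 f_1 ... f_(i-1)).\<close>
function lz_count :: "'a list \<Rightarrow> 'a list \<Rightarrow> nat" where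
  "lz_count P R =
     (if R = [] then 0
      else if (\<exists>k\<le>length R. \<not> sublist (take k R) P)
      then (let k = (LEAST k. \<not> sublist (take k R) P)
            in Suc (lz_count (P @ take k R) (drop k R)))
      else 1)"
  by pat_completeness auto
termination
proof (relation "measure (\<lambda>(P, R). length R)")
  show "wf (measure (\<lambda>(P, R). length R))" by simp
next
  fix P R :: "'a list" and k
  assume ne: "R \<noteq> []" and ex: "\<exists>k\<le>length R. \<not> sublist (take k R) P"
    and k: "k = (LEAST k. \<not> sublist (take k R) P)"
  from ex obtain j where "\<not> sublist (take j R) P" by blast
  hence "\<not> sublist (take k R) P" unfolding k by (rule LeastI)
  hence "k \<noteq> 0" by auto
  thus "((P @ take k R, drop k R), P, R) \<in> measure (\<lambda>(P, R). length R)"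
    using ne by simp
qed

definition z77 :: "'a list \<Rightarrow> nat" where
  "z77 T = lz_count [] T"

definition MS_sub :: "('a list \<Rightarrow> nat) \<Rightarrow> 'a set \<Rightarrow> nat \<Rightarrow> real" where
  "MS_sub C Alph n = Max {real (C T') / real (C T) | T T'.
     T \<in> strs Alph n \<and> T' \<in> strs Alph n \<and> ed T T' = 1}"

definition MS_ins :: "('a list \<Rightarrow> nat) \<Rightarrow> 'a set \<Rightarrow> nat \<Rightarrow> real" where
  "MS_ins C Alph n = Max {real (C T') / real (C T) | T T'.
     T \<in> strs Alph n \<and> T' \<in> strs Alph (n + 1) \<and> ed T T' = 1}"

definition MS_del :: "('a list \<Rightarrow> nat) \<Rightarrow> 'a set \<Rightarrow> nat \<Rightarrow> real" where
  "MS_del C Alph n = Max {real (C T') / real (C T) | T T'.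
     T \<in> strs Alph n \<and> T' \<in> strs Alph (n - 1) \<and> ed T T' = 1}"

end

theory Submission
  imports Defs
begin

(* Over letters a \<noteq> b let W_0 = a and W_(k+1) = W_k W_k b. The LZ77 factors of W_(k+1)
   are a, W_0 b, ..., W_k b, so z77 (W_(k+1)) = k + 2, and appending a prefix of W_(k+1) adds at
   most one factor. Editing the first letter (substituting c, inserting c after it, or deleting
   it) destroys the occurrence of every W_m a at the start of the string. The tail of W_(k+1)
   is a b followed by the blocks W_(m+1) b = (W_m a) (V_m without its first letter) b^(m+2),
   m < k, where W_m = V_m b^m; in the edited string both W_m a and b^(m+2) are new when they
   end, so each block contains the ends of two factors and z77 is at least 2k + 2. Padding
   with prefixes of W_(k+1) reaches every length, and the ratios (2k + 2) / (k + 3) tend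
   to 2. *)

section \<open>Counting LZ77 factors\<close>

declare lz_count.simps[simp del]

lemma lz_count_Nil [simp]: "lz_count P [] = 0"
  by (simp add: lz_count.simps)

lemma lz_count_sublist:
  assumes "R \<noteq> []" "sublist R P"
  shows "lz_count P R = 1"
proof -
  have "\<forall>k. sublist (take k R) P"
    using assms(2) sublist_order.order_trans sublist_take by blast
  then show ?thesis using assms(1) by (simp add: lz_count.simps)
qed

lemma lz_count_unfold:
  assumes "\<not> sublist (take j R) P"
  defines "k \<equiv> LEAST k. \<not> sublist (take k R) P"
  shows "lz_count P R = Suc (lz_count (P @ take k R) (drop k R))"
proof -
  have "R \<noteq> []" using assms(1) by auto
  moreover have "\<exists>k\<le>length R. \<not> sublist (take k R) P"
    using assms(1) by (metis nle_le take_all)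
  ultimately show ?thesis by (simp add: lz_count.simps[of P R] Let_def k_def)
qed

lemma lz_count_first_factor:
  assumes "\<not> sublist (take j R) P"
  obtains k where "0 < k" "k \<le> j" "lz_count P R = Suc (lz_count (P @ take k R) (drop k R))"
proof
  let ?k = "LEAST k. \<not> sublist (take k R) P"
  show "lz_count P R = Suc (lz_count (P @ take ?k R) (drop ?k R))"
    using assms by (rule lz_count_unfold)
  show "?k \<le> j" using assms by (rule Least_le)
  have "\<not> sublist (take ?k R) P" using assms by (rule LeastI)
  then show "0 < ?k" by (cases "?k") auto
qed

lemma lz_count_factor:
  assumes "\<not> sublist f P" "\<And>j. j < length f \<Longrightarrow> sublist (take j f) P"
  shows "lz_count P (f @ R) = Suc (lz_count (P @ f) R)"
proof -
  have "(LEAST k. \<not> sublist (take k (f @ R)) P) = length f"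
  proof (rule Least_equality)
    show "\<not> sublist (take (length f) (f @ R)) P" using assms(1) by simp
    show "length f \<le> k" if "\<not> sublist (take k (f @ R)) P" for k
      using that assms(2)[of k] by (cases "k < length f") auto
  qed
  then show ?thesis using lz_count_unfold[of "length f" "f @ R" P] assms(1) by simp
qed

definition join_segments :: "('a list \<times> 'a list) list \<Rightarrow> 'a list" where
  "join_segments xs = concat (map (\<lambda>(G, Y). G @ Y) xs)"

lemma join_segments_simps [simp]:
  "join_segments [] = []"
  "join_segments ((G, Y) # xs) = G @ Y @ join_segments xs"
  "join_segments (xs @ ys) = join_segments xs @ join_segments ys"
  by (simp_all add: join_segments_def)

fun novel_segments :: "'a list \<Rightarrow> ('a list \<times> 'a list) list \<Rightarrow> bool" where
  "novel_segments P [] = True"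
| "novel_segments P ((G, Y) # xs) \<longleftrightarrow>
     Y \<noteq> [] \<and> \<not> sublist Y (P @ G) \<and> novel_segments (P @ G @ Y) xs"

lemma novel_segments_append:
  "novel_segments P (xs @ ys) \<longleftrightarrow> novel_segments P xs \<and> novel_segments (P @ join_segments xs) ys"
  by (induction P xs rule: novel_segments.induct) auto

lemma novel_segments_drop:
  fixes Z :: "'a list"
  assumes "Y \<noteq> []" "\<not> sublist Y (P @ G)" "novel_segments (P @ G @ Y) xs" "k \<le> length (G @ Y)"
  defines "R \<equiv> G @ Y @ join_segments xs @ Z"
  obtains G' ys where "drop k R = G' @ join_segments ys @ Z"
    and "novel_segments (P @ take k R @ G') ys" and "length xs \<le> length ys"
proof (cases "k \<le> length G")
  case True
  have "drop k R = drop k G @ join_segments (([], Y) # xs) @ Z"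
    and "P @ take k R @ drop k G = P @ G"
    using True by (simp_all add: R_def)
  with assms(1-3) show thesis by (intro that[of "drop k G" "([], Y) # xs"]) simp_all
next
  case False
  have "drop k R = drop (k - length G) Y @ join_segments xs @ Z"
    and "P @ take k R @ drop (k - length G) Y = P @ G @ Y"
    using False assms(4) by (simp_all add: R_def)
  with assms(3) show thesis by (intro that[of "drop (k - length G) Y" xs]) simp_all
qed

(* An LZ77 factor without its last letter occurs earlier, so no factor covers a novel
   segment except at its end: every novel segment contains the end of a factor. *)
lemma lz_count_ge_novel_segments:
  "novel_segments (P @ G) xs \<Longrightarrow> length xs \<le> lz_count P (G @ join_segments xs @ Z)"
proof (induction "length (G @ join_segments xs @ Z)" arbitrary: P G xs rule: less_induct)
  case less
  show ?case
  proof (cases xs)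
    case Nil
    then show ?thesis by simp
  next
    case (Cons s rest)
    obtain X Y where xs: "xs = (X, Y) # rest" using Cons by (cases s) simp
    define GX where "GX = G @ X"
    define R where "R = GX @ Y @ join_segments rest @ Z"
    have R: "G @ join_segments xs @ Z = R" by (simp add: xs GX_def R_def)
    have Y: "Y \<noteq> []" "\<not> sublist Y (P @ GX)" "novel_segments (P @ GX @ Y) rest"
      using less.prems by (simp_all add: xs GX_def)
    have "\<not> sublist (take (length (GX @ Y)) R) P"
    proof
      assume "sublist (take (length (GX @ Y)) R) P"
      then have "sublist (GX @ Y) P" by (simp add: R_def)
      then have "sublist Y (P @ GX)"
        by (meson sublist_append_leftI sublist_append_rightI sublist_order.order_trans)
      with Y(2) show False ..
    qed
    then obtain k where "0 < k" "k \<le> length (GX @ Y)"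
      and lz: "lz_count P R = Suc (lz_count (P @ take k R) (drop k R))"
      by (rule lz_count_first_factor)
    moreover have "length (drop k R) < length R"
    proof -
      have "R \<noteq> []" using Y(1) by (simp add: R_def)
      then show ?thesis using \<open>0 < k\<close> by simp
    qed
    moreover obtain G' ys where "drop k R = G' @ join_segments ys @ Z"
      and "novel_segments (P @ take k R @ G') ys" "length rest \<le> length ys"
      using novel_segments_drop[OF Y \<open>k \<le> length (GX @ Y)\<close>] unfolding R_def by blast
    ultimately have "length rest \<le> lz_count (P @ take k R) (drop k R)"
      using less.hyps[of G' ys "P @ take k R"] R by simp
    then show ?thesis using lz R by (simp add: xs)
  qed
qed

section \<open>Occurrences of runs of a letter\<close>

lemma sublist_replicate_append_Cons:
  assumes "y \<noteq> b"
  shows "sublist (replicate j b) (X @ y # Y) \<longleftrightarrow>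
    sublist (replicate j b) X \<or> sublist (replicate j b) Y"
proof
  assume "sublist (replicate j b) (X @ y # Y)"
  then consider "sublist (replicate j b) X" | "sublist (replicate j b) (y # Y)"
    | xs1 xs2 where "replicate j b = xs1 @ xs2" "suffix xs1 X" "prefix xs2 (y # Y)"
    unfolding sublist_append by blast
  then show "sublist (replicate j b) X \<or> sublist (replicate j b) Y"
  proof cases
    case 2
    then show ?thesis using assms by (cases j) (auto simp: sublist_Cons_right)
  next
    case (3 xs1 xs2)
    show ?thesis
    proof (cases xs2)
      case Nil
      then show ?thesis using 3 by auto
    next
      case (Cons z zs)
      then have "y \<in> set (replicate j b)" using 3 by simp
      then show ?thesis using assms by simp
    qed
  qed simp
next
  have "sublist Y (X @ y # Y)" using sublist_append_leftI[of Y "X @ [y]"] by simp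
  then show "sublist (replicate j b) X \<or> sublist (replicate j b) Y \<Longrightarrow>
      sublist (replicate j b) (X @ y # Y)"
    using sublist_order.order_trans by blast
qed

lemma sublist_replicate_append_leftD:
  assumes "b \<notin> set P" "0 < j" "sublist (replicate j b) (P @ X)"
  shows "sublist (replicate j b) X"
  using assms
proof (induction P)
  case (Cons p P)
  then show ?case
    using sublist_replicate_append_Cons[of p b j "[]" "P @ X"] by auto
qed simp

lemma replicate_Suc_snoc: "replicate (Suc j) b = replicate j b @ [b]"
  by (simp add: replicate_append_same)

lemma sublist_replicate_snocD:
  "sublist (replicate (Suc j) b) (X @ [b]) \<Longrightarrow> sublist (replicate j b) X"
  unfolding replicate_Suc_snoc snoc_sublist_snoc
  by (auto intro: sublist_order.order_trans)

lemma not_sublist_snoc_append_replicate: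
  assumes "a \<noteq> b" "\<not> sublist (xs @ [a]) Z"
  shows "\<not> sublist (xs @ [a]) (Z @ replicate m b)"
proof (induction m)
  case (Suc m)
  have "Z @ replicate (Suc m) b = (Z @ replicate m b) @ [b]"
    by (simp only: replicate_Suc_snoc append_assoc)
  then show ?case
    using Suc assms(1) by (simp only: sublist_snoc) (auto simp: suffix_def)
qed (use assms(2) in simp)

lemma not_sublist_append_Cons:
  assumes "c \<notin> set xs" "length p < length xs" "\<not> sublist xs L"
  shows "\<not> sublist xs (p @ c # L)"
proof
  assume "sublist xs (p @ c # L)"
  then consider "sublist xs p" | "sublist xs (c # L)"
    | xs1 xs2 where "xs = xs1 @ xs2" "suffix xs1 p" "prefix xs2 (c # L)"
    unfolding sublist_append by blast
  then show False
  proof cases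
    case 1
    then show False using assms(2) by (auto dest: sublist_length_le)
  next
    case 2
    then show False using assms by (cases xs) (auto simp: sublist_Cons_right)
  next
    case (3 xs1 xs2)
    then have "xs2 \<noteq> []" using assms(2) by (auto dest: suffix_length_le)
    then show False using 3 assms(1) by (cases xs2) auto
  qed
qed

section \<open>The strings W and their edits\<close>

fun W :: "'a \<Rightarrow> 'a \<Rightarrow> nat \<Rightarrow> 'a list" where
  "W a b 0 = [a]"
| "W a b (Suc n) = W a b n @ W a b n @ [b]"

fun V :: "'a \<Rightarrow> 'a \<Rightarrow> nat \<Rightarrow> 'a list" where
  "V a b 0 = [a]"
| "V a b (Suc n) = W a b n @ V a b n"

lemma W_eq_V_append_replicate: "W a b n = V a b n @ replicate n b"
  by (induction n) (auto simp: replicate_append_same)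

lemma V_eq_Cons_tl: "V a b n = a # tl (V a b n)"
  by (induction n) (simp_all add: W_eq_V_append_replicate, metis append_Cons list.sel(3))

lemma W_eq_Cons_tl: "W a b n = a # tl (W a b n)"
  by (metis W_eq_V_append_replicate V_eq_Cons_tl append_Cons list.sel(3))

lemma W_ne_Nil: "W a b n \<noteq> []"
  by (metis W_eq_Cons_tl list.distinct(1))

lemma set_W: "set (W a b n) \<subseteq> {a, b}"
  by (induction n) auto

lemma sublist_V_W: "sublist (V a b n) (W a b n)"
  by (simp add: W_eq_V_append_replicate)

lemma not_sublist_replicate_W:
  assumes "a \<noteq> b"
  shows "\<not> sublist (replicate (Suc n) b) (W a b n)"
proof (induction n)
  case 0
  then show ?case using assms by (simp add: sublist_Cons_right)
next
  case (Suc n)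
  obtain w where w: "W a b n = a # w" using W_eq_Cons_tl[of a b n] by blast
  have "sublist (replicate (Suc n) b) (replicate (Suc (Suc n)) b)"
    using sublist_append_leftI[of _ "[b]"] by simp
  then have "\<not> sublist (replicate (Suc (Suc n)) b) (W a b n)"
    using Suc sublist_order.order_trans by blast
  moreover have "\<not> sublist (replicate (Suc (Suc n)) b) (w @ [b])"
  proof
    assume "sublist (replicate (Suc (Suc n)) b) (w @ [b])"
    then have "sublist (replicate (Suc n) b) w" by (rule sublist_replicate_snocD)
    moreover have "sublist w (W a b n)" using w sublist_append_leftI[of w "[a]"] by simp
    ultimately show False using Suc sublist_order.order_trans by blast
  qed
  moreover have "W a b (Suc n) = W a b n @ a # (w @ [b])" using w by simp
  ultimately show ?case
    by (simp only: sublist_replicate_append_Cons[OF assms]) blast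
qed

lemma not_sublist_replicate_V:
  assumes "a \<noteq> b"
  shows "\<not> sublist (replicate (Suc n) b) (V a b (Suc n))"
proof -
  have V: "V a b (Suc n) = W a b n @ a # tl (V a b n)"
    by (simp add: V_eq_Cons_tl[symmetric])
  have "sublist (tl (V a b n)) (W a b n)"
    by (rule sublist_order.order_trans[OF sublist_tl sublist_V_W])
  then have "\<not> sublist (replicate (Suc n) b) (tl (V a b n))"
    using not_sublist_replicate_W[OF assms, of n] sublist_order.order_trans by metis
  with V show ?thesis
    using not_sublist_replicate_W[OF assms, of n]
    by (simp only: sublist_replicate_append_Cons[OF assms]) simp
qed

lemma not_sublist_run_block:
  assumes ab: "a \<noteq> b" and U: "\<not> sublist (replicate k b) U"
    and Z: "\<not> sublist (replicate k b) Z" and Y: "length Y < length U + k"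
  shows "\<not> sublist (U @ replicate k b @ [a]) ((Y @ [a]) @ Z @ replicate m b)"
proof
  let ?S = "U @ replicate k b @ [a]"
  have run: "\<not> sublist (replicate k b @ [a]) (Z @ replicate m b)"
  proof (rule not_sublist_snoc_append_replicate[OF ab])
    show "\<not> sublist (replicate k b @ [a]) Z"
      using Z sublist_append_rightI sublist_order.order_trans by metis
  qed
  assume "sublist ?S ((Y @ [a]) @ Z @ replicate m b)"
  then consider "sublist ?S (Y @ [a])" | "sublist ?S (Z @ replicate m b)"
    | xs1 xs2 where "?S = xs1 @ xs2" "suffix xs1 (Y @ [a])" "prefix xs2 (Z @ replicate m b)"
    unfolding sublist_append by blast
  then show False
  proof cases
    case 1
    then show False using Y by (auto dest: sublist_length_le)
  next
    case 2
    then show False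
      using run sublist_append_leftI[of _ U] sublist_order.order_trans by metis
  next
    case (3 xs1 xs2)
    show False
    proof (cases "length xs1 \<le> length U")
      case True
      from 3(1) have "xs2 = drop (length xs1) ?S" by simp
      with True have "sublist (replicate k b @ [a]) xs2" by simp
      with 3(3) have "sublist (replicate k b @ [a]) (Z @ replicate m b)"
        using prefix_imp_sublist sublist_order.order_trans by metis
      with run show False ..
    next
      case False
      define t where "t = length xs1 - length U"
      have "length xs1 \<le> length U + k"
        using 3(2) Y by (auto dest: suffix_length_le)
      then have t: "0 < t" "t \<le> k" using False by (simp_all add: t_def)
      from 3(1) have "xs1 = take (length U + t) ?S" using False by (simp add: t_def)
      also have "\<dots> = (U @ replicate (t - 1) b) @ [b]"
        using t by (simp add: min_def replicate_Suc_snoc[symmetric])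
      finally show False using 3(2) ab by simp
    qed
  qed
qed

(* W_k a = V_k b^k a, where V_k contains no run b^k; the only b^k a in tl W_(k+1) occurs
   too early to be preceded by a copy of V_k. *)
lemma not_sublist_W_snoc_tl_W:
  assumes ab: "a \<noteq> b"
  shows "\<not> sublist (W a b k @ [a]) (tl (W a b (Suc k)))"
proof (cases k)
  case 0
  then show ?thesis using ab by (simp add: sublist_Cons_right)
next
  case (Suc j)
  let ?U = "V a b k"
  obtain u where u: "?U = a # u" using V_eq_Cons_tl[of a b k] by blast
  have "W a b k @ [a] = ?U @ replicate k b @ [a]"
    by (simp add: W_eq_V_append_replicate)
  moreover have "tl (W a b (Suc k)) = ((u @ replicate k b) @ [a]) @ u @ replicate (Suc k) b"
    using u by (simp add: W_eq_V_append_replicate replicate_Suc_snoc)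
  moreover have no_run_U: "\<not> sublist (replicate k b) ?U"
    using not_sublist_replicate_V[OF ab, of j] Suc by simp
  moreover have "\<not> sublist (replicate k b) u"
    using no_run_U u sublist_append_leftI[of u "[a]"] sublist_order.order_trans by fastforce
  moreover have "length (u @ replicate k b) < length ?U + k" using u by simp
  ultimately show ?thesis
    using not_sublist_run_block[OF ab] by metis
qed

fun W_segments :: "'a \<Rightarrow> 'a \<Rightarrow> nat \<Rightarrow> ('a list \<times> 'a list) list" where
  "W_segments a b 0 = []"
| "W_segments a b (Suc m) =
     W_segments a b m @ [([], W a b m @ [a]), (tl (V a b m), replicate (Suc (Suc m)) b)]"

lemma length_W_segments [simp]: "length (W_segments a b n) = 2 * n"
  by (induction n) auto

lemma tl_W_Suc_eq_join_W_segments: "tl (W a b (Suc n)) = [a, b] @ join_segments (W_segments a b n)"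
proof (induction n)
  case (Suc n)
  obtain w where w: "W a b n = a # w" using W_eq_Cons_tl[of a b n] by blast
  obtain v where v: "V a b n = a # v" using V_eq_Cons_tl[of a b n] by blast
  have "tl (W a b (Suc (Suc n))) = tl (W a b (Suc n)) @ W a b (Suc n) @ [b]"
    using w by simp
  also have "W a b (Suc n) @ [b] = (W a b n @ [a]) @ v @ replicate (Suc (Suc n)) b"
    using v by (simp add: W_eq_V_append_replicate replicate_append_same)
  finally show ?case using Suc v by simp
qed simp

lemma novel_W_segments:
  assumes ab: "a \<noteq> b" and "b \<notin> set pre"
    and fresh: "\<And>k. \<not> sublist (W a b k @ [a]) (pre @ tl (W a b (Suc k)))"
  shows "novel_segments (pre @ [a, b]) (W_segments a b n)"
proof (induction n)
  case (Suc n)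
  let ?run = "replicate (Suc (Suc n)) b"
  have no_run: "\<not> sublist ?run Y" if "sublist Y (W a b (Suc n))" for Y
    using that not_sublist_replicate_W[OF ab, of "Suc n"] sublist_order.order_trans by metis
  have "\<not> sublist ?run (tl (W a b (Suc n)) @ a # tl (W a b n) @ a # tl (V a b n))"
  proof -
    have W_Suc: "sublist (W a b n) (W a b (Suc n))" by simp
    have "sublist (tl (W a b n)) (W a b (Suc n))"
      using sublist_order.order_trans[OF sublist_tl W_Suc] .
    moreover have "sublist (tl (V a b n)) (W a b (Suc n))"
      using sublist_order.order_trans[OF sublist_order.order_trans[OF sublist_tl sublist_V_W] W_Suc] .
    ultimately show ?thesis
      using no_run sublist_tl[of "W a b (Suc n)"]
      by (simp only: sublist_replicate_append_Cons[OF ab]) blast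
  qed
  then have "\<not> sublist ?run (pre @ tl (W a b (Suc n)) @ W a b n @ V a b n)"
    using sublist_replicate_append_leftD[OF assms(2)]
    by (metis V_eq_Cons_tl W_eq_Cons_tl append_Cons zero_less_Suc)
  moreover have "(pre @ [a, b]) @ join_segments (W_segments a b n) = pre @ tl (W a b (Suc n))"
    by (simp only: tl_W_Suc_eq_join_W_segments append_assoc)
  ultimately show ?case
    using Suc.IH fresh[of n]
    by (simp add: novel_segments_append V_eq_Cons_tl[symmetric] del: replicate_Suc)
qed simp

lemma lz_count_W_append: "lz_count [] (W a b n @ R) = Suc n + lz_count (W a b n) R"
proof (induction n arbitrary: R)
  case 0
  show ?case using lz_count_factor[of "[a]" "[]" R] by auto
next
  case (Suc n)
  have "lz_count (W a b n) ((W a b n @ [b]) @ R) = Suc (lz_count (W a b (Suc n)) R)"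
  proof (subst lz_count_factor)
    show "\<not> sublist (W a b n @ [b]) (W a b n)" by (auto dest: sublist_length_le)
    show "sublist (take j (W a b n @ [b])) (W a b n)" if "j < length (W a b n @ [b])" for j
      using that by simp
  qed simp
  then show ?case using Suc[of "(W a b n @ [b]) @ R"] by simp
qed

lemma z77_W_append: "z77 (W a b n @ R) = Suc n + lz_count (W a b n) R"
  by (simp add: z77_def lz_count_W_append)

lemma z77_W_append_prefix_le:
  assumes "prefix u (W a b n)"
  shows "z77 (W a b n @ u) \<le> n + 2"
  using assms lz_count_sublist[of u "W a b n"] z77_W_append[of a b n u] by (cases "u = []") auto

lemma z77_edited_W_ge:
  assumes "a \<noteq> b" "novel_segments [] xs" "join_segments xs = pre @ [a, b]" "b \<notin> set pre"
    and "\<And>k. \<not> sublist (W a b k @ [a]) (pre @ tl (W a b (Suc k)))"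
  shows "length xs + 2 * n \<le> z77 (pre @ tl (W a b (Suc n)) @ u)"
proof -
  have "novel_segments ([] @ []) (xs @ W_segments a b n)"
    using assms(2,3) novel_W_segments[OF assms(1,4,5)] by (simp add: novel_segments_append)
  then have "length (xs @ W_segments a b n) \<le> lz_count [] ([] @ join_segments (xs @ W_segments a b n) @ u)"
    by (rule lz_count_ge_novel_segments)
  moreover have "[] @ join_segments (xs @ W_segments a b n) @ u = pre @ tl (W a b (Suc n)) @ u"
    using assms(3) by (simp add: tl_W_Suc_eq_join_W_segments del: W.simps)
  ultimately show ?thesis unfolding z77_def by (metis length_append length_W_segments)
qed

lemma z77_subst_W_ge:
  assumes "a \<noteq> b" "c \<noteq> a" "c \<noteq> b"
  shows "2 * n + 3 \<le> z77 (c # tl (W a b (Suc n)) @ u)"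
proof -
  have "\<not> sublist (W a b k @ [a]) ([] @ c # tl (W a b (Suc k)))" for k
  proof (rule not_sublist_append_Cons)
    show "c \<notin> set (W a b k @ [a])" using set_W[of a b k] assms by auto
  qed (simp_all add: not_sublist_W_snoc_tl_W[OF assms(1)] del: W.simps)
  then show ?thesis
    using z77_edited_W_ge[of a b "[([], [c]), ([], [a]), ([], [b])]" "[c]" n u] assms
    by (simp add: sublist_Cons_right)
qed

lemma z77_insert_W_ge:
  assumes "a \<noteq> b" "c \<noteq> a" "c \<noteq> b"
  shows "2 * n + 3 \<le> z77 (a # c # tl (W a b (Suc n)) @ u)"
proof -
  have "\<not> sublist (W a b k @ [a]) ([a] @ c # tl (W a b (Suc k)))" for k
  proof (rule not_sublist_append_Cons)
    show "c \<notin> set (W a b k @ [a])" using set_W[of a b k] assms by auto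
    show "length [a] < length (W a b k @ [a])" using W_ne_Nil[of a b k] by simp
  qed (simp add: not_sublist_W_snoc_tl_W[OF assms(1)] del: W.simps)
  then show ?thesis
    using z77_edited_W_ge[of a b "[([], [a]), ([], [c]), ([a], [b])]" "[a, c]" n u] assms
    by (simp add: sublist_Cons_right)
qed

lemma z77_delete_W_ge:
  assumes "a \<noteq> b"
  shows "2 * n + 2 \<le> z77 (tl (W a b (Suc n)) @ u)"
  using z77_edited_W_ge[of a b "[([], [a]), ([], [b])]" "[]" n u] assms
    not_sublist_W_snoc_tl_W[OF assms]
  by (simp add: sublist_Cons_right)

section \<open>Edit distance and sensitivity\<close>

lemma ed_refl [simp]: "ed xs xs = 0"
  by (induction xs) auto

lemma ed_eq_0_iff: "ed xs ys = 0 \<longleftrightarrow> xs = ys"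
proof
  show "ed xs ys = 0 \<Longrightarrow> xs = ys"
    by (induction xs ys rule: ed.induct) (auto simp: min_def split: if_splits)
qed simp

lemma ed_Cons_subst: "a \<noteq> c \<Longrightarrow> ed (a # L) (c # L) = 1"
  using ed_eq_0_iff[of "a # L" "c # L"] by (cases L) auto

lemma ed_le_Cons: "ed L (c # L) \<le> 1"
proof (cases L)
  case (Cons x L')
  have "ed (x # L') (c # x # L') \<le> ed (x # L') (x # L') + 1" by simp
  then show ?thesis using Cons by simp
qed simp

lemma ed_Cons_insert: "ed (a # L) (a # c # L) = 1"
proof -
  have "ed (a # L) (a # c # L) \<le> ed L (c # L)" by simp
  then show ?thesis using ed_le_Cons[of L c] ed_eq_0_iff[of "a # L" "a # c # L"] by simp
qed

lemma ed_Cons_delete: "ed (a # L) L = 1"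
proof -
  have "ed (a # L) L \<le> 1"
  proof (cases L)
    case (Cons x L')
    have "ed (a # x # L') (x # L') \<le> ed (x # L') (x # L') + 1" by simp
    then show ?thesis using Cons by simp
  qed simp
  moreover have "a # L \<noteq> L" by (metis impossible_Cons le_refl)
  ultimately show ?thesis using ed_eq_0_iff[of "a # L" L] by auto
qed

definition MS_edit :: "('a list \<Rightarrow> nat) \<Rightarrow> 'a set \<Rightarrow> nat \<Rightarrow> nat \<Rightarrow> real" where
  "MS_edit C Alph n n' = Max {real (C T') / real (C T) | T T'.
     T \<in> strs Alph n \<and> T' \<in> strs Alph n' \<and> ed T T' = 1}"

lemma MS_sub_eq_MS_edit: "MS_sub C Alph n = MS_edit C Alph n n"
  and MS_ins_eq_MS_edit: "MS_ins C Alph n = MS_edit C Alph n (n + 1)"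
  and MS_del_eq_MS_edit: "MS_del C Alph n = MS_edit C Alph n (n - 1)"
  by (simp_all add: MS_sub_def MS_ins_def MS_del_def MS_edit_def)

lemma ratio_le_MS_edit:
  assumes "finite Alph" "T \<in> strs Alph n" "T' \<in> strs Alph n'" "ed T T' = 1"
  shows "real (C T') / real (C T) \<le> MS_edit C Alph n n'"
  unfolding MS_edit_def
proof (rule Max_ge)
  have "finite (strs Alph n \<times> strs Alph n')"
    using assms(1) by (simp add: strs_def finite_lists_length_eq)
  then show "finite {real (C T') / real (C T) | T T'.
      T \<in> strs Alph n \<and> T' \<in> strs Alph n' \<and> ed T T' = 1}"
    by (rule finite_subset[rotated, OF finite_imageI[of _ "\<lambda>(T, T'). real (C T') / real (C T)"]])
      auto
qed (use assms in blast)

lemma strict_mono_blockE: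
  fixes L :: "nat \<Rightarrow> nat"
  assumes "strict_mono L" "L n0 \<le> N"
  obtains n where "n0 \<le> n" "L n \<le> N" "N < L (Suc n)"
  using assms(2)
proof (induction N arbitrary: thesis rule: dec_induct)
  case base
  then show ?case using assms(1) by (meson le_refl strict_mono_Suc_iff)
next
  case (step N)
  then obtain n where n: "n0 \<le> n" "L n \<le> N" "N < L (Suc n)" by blast
  show ?case
  proof (cases "Suc N < L (Suc n)")
    case True
    then show ?thesis using n step.prems by simp
  next
    case False
    then have "L (Suc n) = Suc N" using n(3) by simp
    then show ?thesis
      using n(1) step.prems assms(1) by (metis le_SucI lessI strict_mono_Suc_iff order_refl)
  qed
qed

lemma Liminf_ge_on_blocks:
  fixes L :: "nat \<Rightarrow> nat" and r f :: "nat \<Rightarrow> real"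
  assumes "strict_mono L" "r \<longlonglongrightarrow> c"
    and "\<And>n N. L n \<le> N \<Longrightarrow> N < L (Suc n) \<Longrightarrow> r n \<le> f N"
  shows "ereal c \<le> Liminf sequentially (\<lambda>N. ereal (f N))"
  unfolding le_Liminf_iff
proof (intro allI impI)
  fix y assume "y < ereal c"
  then obtain n0 where n0: "\<And>n. n0 \<le> n \<Longrightarrow> y < ereal (r n)"
    using order_tendstoD(1)[OF assms(2)[THEN lim_ereal[THEN iffD2]]]
    unfolding eventually_sequentially by blast
  show "\<forall>\<^sub>F N in sequentially. y < ereal (f N)"
  proof (rule eventually_sequentiallyI)
    fix N assume "L n0 \<le> N"
    then obtain n where "n0 \<le> n" "L n \<le> N" "N < L (Suc n)"
      using strict_mono_blockE[OF assms(1)] by blast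
    then show "y < ereal (f N)"
      using n0 assms(3) less_le_trans by fastforce
  qed
qed

lemma tendsto_2n_plus_2_div_n_plus_3: "(\<lambda>n. (2 * real n + 2) / (real n + 3)) \<longlonglongrightarrow> 2"
proof -
  have "filterlim (\<lambda>n. 3 + real n) at_infinity sequentially"
    using filterlim_tendsto_add_at_top[OF tendsto_const filterlim_real_sequentially]
    by (rule filterlim_at_top_imp_at_infinity)
  then have "(\<lambda>n. 2 - 4 / (3 + real n)) \<longlonglongrightarrow> 2 - 0"
    by (intro tendsto_diff tendsto_const tendsto_divide_0[OF tendsto_const])
  moreover have "2 - 4 / (3 + real n) = (2 * real n + 2) / (real n + 3)" for n
    by (simp add: field_simps)
  ultimately show ?thesis by simp
qed

(* As z77 (W a b (Suc n)) = n + 2, the hypothesis edited says that the edit doubles z77 up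
   to the slack d. *)
lemma Liminf_MS_edit_ge_2_of_edited_W:
  assumes "finite Alph" "{a, b} \<subseteq> Alph" "set p \<subseteq> Alph"
    and ed: "\<And>L. ed (a # L) (p @ L) = 1"
    and edited: "\<And>n u. 2 * n + 4 \<le> z77 (p @ tl (W a b (Suc n)) @ u) + d" and "d \<le> 2"
  shows "2 \<le> Liminf sequentially (\<lambda>N. ereal (MS_edit z77 Alph N (N + length p - 1)))"
proof -
  define L where "L n = length (W a b (Suc n))" for n
  have L_Suc: "L (Suc n) = 2 * L n + 1" for n by (simp add: L_def)
  then have "strict_mono L" by (simp add: strict_mono_Suc_iff)
  moreover have
    "(2 * real n + 2) / (real n + 3) \<le> MS_edit z77 Alph N (N + length p - 1)"
    if N: "L n \<le> N" "N < L (Suc n)" for n N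
  proof -
    define w where "w = W a b (Suc n)"
    define u where "u = take (N - L n) w"
    have w: "w = a # tl w" "set w \<subseteq> Alph" "length w = L n"
      using W_eq_Cons_tl[of a b "Suc n"] set_W[of a b "Suc n"] assms(2)
      by (auto simp: w_def L_def simp del: W.simps)
    have u: "length u = N - L n" "set u \<subseteq> Alph" "prefix u w"
      using N L_Suc[of n] w(2,3) set_take_subset[of _ w] by (auto simp: u_def take_is_prefix)
    let ?T = "w @ u" and ?T' = "p @ tl w @ u"
    have "0 < z77 ?T" "z77 ?T \<le> n + 3"
      using z77_W_append[of a b "Suc n" u] z77_W_append_prefix_le[of u a b "Suc n"] u(3)
      by (simp_all add: w_def del: W.simps)
    moreover have "2 * n + 2 \<le> z77 ?T'"
      using edited[of n u] \<open>d \<le> 2\<close> by (simp add: w_def del: W.simps)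
    ultimately have "(2 * real n + 2) / (real n + 3) \<le> real (z77 ?T') / real (z77 ?T)"
      by (intro frac_le) simp_all
    also have "\<dots> \<le> MS_edit z77 Alph N (N + length p - 1)"
    proof (rule ratio_le_MS_edit[OF assms(1)])
      have "0 < L n" using w(1,3) by (metis length_greater_0_conv list.distinct(1))
      then show "?T \<in> strs Alph N" "?T' \<in> strs Alph (N + length p - 1)"
        using N w u assms(3) set_mono_sublist[OF sublist_tl, of w] by (auto simp: strs_def)
      show "ed ?T ?T' = 1"
        using ed[of "tl w @ u"] w(1) by (metis append_Cons)
    qed
    finally show ?thesis .
  qed
  ultimately show ?thesis
    using Liminf_ge_on_blocks[OF _ tendsto_2n_plus_2_div_n_plus_3] by simp
qed

lemma additive_sensitivity_of_edited_W:
  assumes "{a, b} \<subseteq> Alph" "set p \<subseteq> Alph"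
    and ed: "\<And>L. ed (a # L) (p @ L) = 1"
    and edited: "\<And>n u. 2 * n + 4 \<le> z77 (p @ tl (W a b (Suc n)) @ u) + d"
  shows "\<forall>m. \<exists>T T'. set T \<subseteq> Alph \<and> set T' \<subseteq> Alph \<and> length T' + 1 = length T + length p
    \<and> ed T T' = 1 \<and> z77 T \<ge> m \<and> int (z77 T') - int (z77 T) \<ge> int (z77 T) - int d"
proof
  fix m
  define w where "w = W a b (Suc m)"
  have w: "w = a # tl w" "set w \<subseteq> Alph"
    using W_eq_Cons_tl[of a b "Suc m"] set_W[of a b "Suc m"] assms(1)
    by (auto simp: w_def simp del: W.simps)
  have z: "z77 w = m + 2" using z77_W_append[of a b "Suc m" "[]"] by (simp add: w_def del: W.simps)
  have "set (p @ tl w) \<subseteq> Alph" using w(2) assms(2) set_mono_sublist[OF sublist_tl, of w] by auto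
  moreover have "ed w (p @ tl w) = 1" using ed w(1) by metis
  moreover have "length (p @ tl w) + 1 = length w + length p"
    using w(1) by (cases w) simp_all
  moreover have "int (z77 (p @ tl w)) - int (z77 w) \<ge> int (z77 w) - int d"
    using edited[of m "[]"] z by (simp add: w_def del: W.simps)
  ultimately show "\<exists>T T'. set T \<subseteq> Alph \<and> set T' \<subseteq> Alph \<and> length T' + 1 = length T + length p
    \<and> ed T T' = 1 \<and> z77 T \<ge> m \<and> int (z77 T') - int (z77 T) \<ge> int (z77 T) - int d"
    using w(2) z by (intro exI[of _ w] exI[of _ "p @ tl w"]) simp
qed

theorem mainTheorem8:
  fixes Alph :: "'a set"
  assumes "finite Alph" and "card Alph \<ge> 3"
  shows
    "(Liminf sequentially (\<lambda>n. ereal (MS_sub z77 Alph n)) \<ge> 2)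
    \<and> (\<forall>m. \<exists>T T'. set T \<subseteq> Alph \<and> set T' \<subseteq> Alph \<and> length T' = length T
        \<and> ed T T' = 1 \<and> z77 T \<ge> m
        \<and> int (z77 T') - int (z77 T) \<ge> int (z77 T) - 1)
    \<and> (Liminf sequentially (\<lambda>n. ereal (MS_ins z77 Alph n)) \<ge> 2)
    \<and> (\<forall>m. \<exists>T T'. set T \<subseteq> Alph \<and> set T' \<subseteq> Alph \<and> length T' = length T + 1
        \<and> ed T T' = 1 \<and> z77 T \<ge> m
        \<and> int (z77 T') - int (z77 T) \<ge> int (z77 T) - 1)
    \<and> (Liminf sequentially (\<lambda>n. ereal (MS_del z77 Alph n)) \<ge> 2)
    \<and> (\<forall>m. \<exists>T T'. set T \<subseteq> Alph \<and> set T' \<subseteq> Alph \<and> length T' + 1 = length T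
        \<and> ed T T' = 1 \<and> z77 T \<ge> m
        \<and> int (z77 T') - int (z77 T) \<ge> int (z77 T) - 2)"
proof -
  obtain B where "B \<subseteq> Alph" "card B = 3"
    using obtain_subset_with_card_n[OF assms(2)] by blast
  then obtain a b c where abc: "{a, b, c} \<subseteq> Alph" "a \<noteq> b" "c \<noteq> a" "c \<noteq> b"
    unfolding card_3_iff by blast
  have sub: "ed (a # L) ([c] @ L) = 1" "2 * n + 4 \<le> z77 ([c] @ tl (W a b (Suc n)) @ u) + 1"
    for L n u
    using ed_Cons_subst[OF not_sym[OF abc(3)], of L] z77_subst_W_ge[OF abc(2-4), of n u]
    by (simp_all only: append_Cons append_Nil)
  have ins: "ed (a # L) ([a, c] @ L) = 1" "2 * n + 4 \<le> z77 ([a, c] @ tl (W a b (Suc n)) @ u) + 1"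
    for L n u
    using ed_Cons_insert[of a L c] z77_insert_W_ge[OF abc(2-4), of n u]
    by (simp_all only: append_Cons append_Nil)
  have del: "ed (a # L) ([] @ L) = 1" "2 * n + 4 \<le> z77 ([] @ tl (W a b (Suc n)) @ u) + 2"
    for L n u
    using ed_Cons_delete[of a L] z77_delete_W_ge[OF abc(2), of n u]
    by (simp_all only: append_Nil)
  have Alph: "{a, b} \<subseteq> Alph" "set [c] \<subseteq> Alph" "set [a, c] \<subseteq> Alph" "set [] \<subseteq> Alph"
    using abc(1) by auto
  note MS = Liminf_MS_edit_ge_2_of_edited_W[OF assms(1) Alph(1)]
    and AS = additive_sensitivity_of_edited_W[OF Alph(1)]
  show ?thesis
    unfolding MS_sub_eq_MS_edit MS_ins_eq_MS_edit MS_del_eq_MS_edit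
    using MS[OF Alph(2) sub] AS[OF Alph(2) sub] MS[OF Alph(3) ins] AS[OF Alph(3) ins]
      MS[OF Alph(4) del] AS[OF Alph(4) del]
    by simp
qed

end
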